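(* The sequence $(\beta^c_k)_{k\in\mathbb{N}}$ is strictly decreasing and $\lim_{k\to+\infty}\beta^c_k=1$.
   Context: $\mathbb{N}=\{0,1,2,\dots\}$. For $t\ge 0$ let $q(t)=\lfloor t+1\rfloor/2$ if $\lfloor t\rfloor$ is odd and $q(t)=t-\lfloor t\rfloor/2$ if $\lfloor t\rfloor$ is even, and $p(t)=t+1-q(t)$. For $\beta\ge1$ let $\hat\sigma(t,\beta)\in(0,1)$ be the unique solution $\sigma$ of $\frac{p(t)\sigma}{\sqrt{1-\sigma^2}}+\frac{q(t)\sigma}{\sqrt{\beta^2-\sigma^2}}=1$, and $l(t,\beta)=\frac{p(t)}{\sqrt{1-\hat\sigma^2}}+\frac{\beta^2q(t)}{\sqrt{\beta^2-\hat\sigma^2}}-t-\sqrt2$. For $k\in\mathbb{N}$, $\delta(k,\beta)=l(2k+2,\beta)-l(2k,\beta)$. For each $k\in\mathbb{N}$, $\beta^c_k$ denotes the unique number in $(1,\sqrt2)$ with $\delta(k,\beta^c_k)=0$ (well defined since $\beta\mapsto\delta(k,\beta)$ is strictly increasing on $[1,\infty)$ with $\delta(k,1)<0<\delta(k,\sqrt2)$). *)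

theory Defs
  imports "HOL-Analysis.Analysis"
begin

definition q_fun :: "real \<Rightarrow> real" where
  "q_fun t = (if odd \<lfloor>t\<rfloor> then real_of_int \<lfloor>t + 1\<rfloor> / 2
              else t - real_of_int \<lfloor>t\<rfloor> / 2)"

definition p_fun :: "real \<Rightarrow> real" where
  "p_fun t = t + 1 - q_fun t"

definition sigma_hat :: "real \<Rightarrow> real \<Rightarrow> real" where
  "sigma_hat t \<beta> = (THE \<sigma>. 0 < \<sigma> \<and> \<sigma> < 1 \<and>
      p_fun t * \<sigma> / sqrt (1 - \<sigma>\<^sup>2) + q_fun t * \<sigma> / sqrt (\<beta>\<^sup>2 - \<sigma>\<^sup>2) = 1)"

definition l_fun :: "real \<Rightarrow> real \<Rightarrow> real" where
  "l_fun t \<beta> = p_fun t / sqrt (1 - (sigma_hat t \<beta>)\<^sup>2)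
      + \<beta>\<^sup>2 * q_fun t / sqrt (\<beta>\<^sup>2 - (sigma_hat t \<beta>)\<^sup>2) - t - sqrt 2"

definition delta :: "nat \<Rightarrow> real \<Rightarrow> real" where
  "delta k \<beta> = l_fun (2 * real k + 2) \<beta> - l_fun (2 * real k) \<beta>"

definition beta_c :: "nat \<Rightarrow> real" where
  "beta_c k = (THE \<beta>. 1 < \<beta> \<and> \<beta> < sqrt 2 \<and> delta k \<beta> = 0)"

end

theory Submission
  imports Defs
begin

text \<open>
  For \<open>p \<ge> 1\<close>, \<open>q \<ge> 0\<close>, \<open>b \<ge> 1\<close> the concave function
  \<open>G(\<sigma>) = \<sigma> + p sqrt(1 - \<sigma>\<^sup>2) + q sqrt(b\<^sup>2 - \<sigma>\<^sup>2)\<close> has critical point \<open>sigma_hat\<close>, and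
  \<open>l + t + sqrt 2\<close> is its maximum \<open>V(p, q, b)\<close>.  Cauchy--Schwarz bounds \<open>G\<close> by tangent lines;
  this shows that \<open>V\<close> is concave in \<open>b\<close> with slope between \<open>q\<close> and \<open>q + 1\<close>, and strictly
  convex along the diagonal \<open>(p, q) \<mapsto> (p + 1, q + 1)\<close>.  As
  \<open>\<delta>(k, \<beta>) = V(k + 2, k + 1, \<beta>) - V(k + 1, k, \<beta>) - 2\<close>, the slope bounds make \<open>\<delta>(k, \<cdot>)\<close>
  strictly increasing and the convexity makes \<open>\<delta>(\<cdot>, \<beta>)\<close> strictly increasing, so the zeros
  \<open>\<beta>\<^sup>c\<^sub>k\<close> decrease.  Explicit lower and upper bounds on \<open>V\<close> give \<open>\<delta>(k, 1 + 2/(k + 1)) > 0\<close>,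
  which squeezes \<open>\<beta>\<^sup>c\<^sub>k\<close> to \<open>1\<close>.
\<close>

definition objective :: "real \<Rightarrow> real \<Rightarrow> real \<Rightarrow> real \<Rightarrow> real" where
  "objective p q b \<sigma> = \<sigma> + p * sqrt (1 - \<sigma>\<^sup>2) + q * sqrt (b\<^sup>2 - \<sigma>\<^sup>2)"

definition crit_lhs :: "real \<Rightarrow> real \<Rightarrow> real \<Rightarrow> real \<Rightarrow> real" where
  "crit_lhs p q b \<sigma> = p * \<sigma> / sqrt (1 - \<sigma>\<^sup>2) + q * \<sigma> / sqrt (b\<^sup>2 - \<sigma>\<^sup>2)"

definition crit_point :: "real \<Rightarrow> real \<Rightarrow> real \<Rightarrow> real" where
  "crit_point p q b = (THE \<sigma>. 0 < \<sigma> \<and> \<sigma> < 1 \<and> crit_lhs p q b \<sigma> = 1)"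

definition opt_value :: "real \<Rightarrow> real \<Rightarrow> real \<Rightarrow> real" where
  "opt_value p q b = objective p q b (crit_point p q b)"

text \<open>By the envelope theorem, \<open>\<partial>G/\<partial>b\<close> at the critical point is the derivative of
  \<open>opt_value\<close> in \<open>b\<close>.\<close>

definition opt_value_slope :: "real \<Rightarrow> real \<Rightarrow> real \<Rightarrow> real" where
  "opt_value_slope p q b = q * b / sqrt (b\<^sup>2 - (crit_point p q b)\<^sup>2)"

lemma divide_sqrt_diff_strict_mono:
  fixes a b C :: real
  assumes "0 \<le> a" "a < b" "b\<^sup>2 < C"
  shows "a / sqrt (C - a\<^sup>2) < b / sqrt (C - b\<^sup>2)"
proof -
  have "a\<^sup>2 < b\<^sup>2" using assms by (simp add: power_strict_mono)
  then have "sqrt (C - b\<^sup>2) \<le> sqrt (C - a\<^sup>2)" by simp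
  moreover have "0 < sqrt (C - b\<^sup>2)" using assms by simp
  ultimately show ?thesis using assms frac_less by blast
qed

lemma divide_sqrt_diff_mono:
  fixes a b C :: real
  assumes "0 \<le> a" "a \<le> b" "b\<^sup>2 < C"
  shows "a / sqrt (C - a\<^sup>2) \<le> b / sqrt (C - b\<^sup>2)"
  using divide_sqrt_diff_strict_mono[OF assms(1) _ assms(3)] assms(2) by (cases "a = b") auto

lemma crit_lhs_strict_mono:
  assumes "0 < p" "0 \<le> q" "1 \<le> b" "0 \<le> x" "x < y" "y < 1"
  shows "crit_lhs p q b x < crit_lhs p q b y"
proof -
  have y2: "y\<^sup>2 < 1" using assms by (simp add: power_less_one_iff abs_less_iff)
  have "1 \<le> b\<^sup>2" using assms by (simp add: one_le_power)
  then have "y\<^sup>2 < b\<^sup>2" using y2 by linarith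
  then have "x / sqrt (1 - x\<^sup>2) < y / sqrt (1 - y\<^sup>2)" "x / sqrt (b\<^sup>2 - x\<^sup>2) \<le> y / sqrt (b\<^sup>2 - y\<^sup>2)"
    using divide_sqrt_diff_strict_mono[of x y 1] divide_sqrt_diff_mono[of x y "b\<^sup>2"] assms y2 by auto
  then show ?thesis
    using mult_strict_left_mono[of _ _ p] mult_left_mono[of _ _ q] assms
    unfolding crit_lhs_def times_divide_eq_right[symmetric] by (smt (verit))
qed

lemma crit_point_ex1:
  assumes "1 \<le> p" "0 \<le> q" "1 \<le> b"
  shows "\<exists>!\<sigma>. 0 < \<sigma> \<and> \<sigma> < 1 \<and> crit_lhs p q b \<sigma> = 1"
proof -
  have b2: "1 \<le> b\<^sup>2" using assms by (simp add: one_le_power)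
  have "continuous_on {0..4/5} (crit_lhs p q b)"
  proof -
    have "\<forall>x\<in>{0..4/5::real}. x\<^sup>2 < 1 \<and> x\<^sup>2 < b\<^sup>2"
    proof
      fix x :: real assume "x \<in> {0..4/5}"
      then have "x\<^sup>2 \<le> (4/5)\<^sup>2" by (auto intro: power_mono)
      then show "x\<^sup>2 < 1 \<and> x\<^sup>2 < b\<^sup>2" using b2 by (simp add: power2_eq_square)
    qed
    then show ?thesis unfolding crit_lhs_def by (intro continuous_intros) auto
  qed
  moreover have "crit_lhs p q b 0 \<le> 1" by (simp add: crit_lhs_def)
  moreover have "1 \<le> crit_lhs p q b (4/5)"
  proof -
    have "sqrt (1 - (4/5::real)\<^sup>2) = sqrt ((3/5)\<^sup>2)" by (simp add: power2_eq_square)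
    then have s: "sqrt (1 - (4/5::real)\<^sup>2) = 3/5" by simp
    have "p * (4/5) / sqrt (1 - (4/5)\<^sup>2) = 4 * p / 3" unfolding s by simp
    moreover have "(4/5::real)\<^sup>2 < b\<^sup>2" using b2 by (simp add: power2_eq_square)
    then have "0 \<le> q * (4/5) / sqrt (b\<^sup>2 - (4/5)\<^sup>2)" using assms by simp
    ultimately show ?thesis using assms unfolding crit_lhs_def by linarith
  qed
  ultimately obtain x where x: "0 \<le> x" "x \<le> 4/5" "crit_lhs p q b x = 1"
    using IVT' by (metis order.refl zero_le_divide_iff zero_le_numeral)
  then have "x \<noteq> 0" by (auto simp: crit_lhs_def)
  with x have "0 < x \<and> x < 1 \<and> crit_lhs p q b x = 1" by auto
  moreover have "y = x" if "0 < y \<and> y < 1 \<and> crit_lhs p q b y = 1" for y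
    using crit_lhs_strict_mono[of p q b y x] crit_lhs_strict_mono[of p q b x y]
      that calculation assms by (cases y x rule: linorder_cases) auto
  ultimately show ?thesis by blast
qed

lemma crit_point_facts:
  assumes "1 \<le> p" "0 \<le> q" "1 \<le> b"
  defines "s \<equiv> crit_point p q b"
  defines "u \<equiv> sqrt (1 - s\<^sup>2)" and "v \<equiv> sqrt (b\<^sup>2 - s\<^sup>2)"
  shows "0 < s" "s < 1" "s\<^sup>2 < 1" "s\<^sup>2 < b\<^sup>2" "0 < u" "0 < v" "u\<^sup>2 = 1 - s\<^sup>2" "v\<^sup>2 = b\<^sup>2 - s\<^sup>2"
    "p * s / u + q * s / v = 1" "p * s * v + q * s * u = u * v"
proof -
  show s0: "0 < s" and s1: "s < 1" and eq: "p * s / u + q * s / v = 1"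
    using theI'[OF crit_point_ex1[OF assms(1-3)]]
    unfolding s_def u_def v_def crit_point_def[symmetric] by (auto simp: crit_lhs_def)
  show s2: "s\<^sup>2 < 1" using s0 s1 by (simp add: power_less_one_iff abs_less_iff)
  have "1 \<le> b\<^sup>2" using assms by (simp add: one_le_power)
  then show s3: "s\<^sup>2 < b\<^sup>2" using s2 by linarith
  show "0 < u" "0 < v" "u\<^sup>2 = 1 - s\<^sup>2" "v\<^sup>2 = b\<^sup>2 - s\<^sup>2"
    using s2 s3 unfolding u_def v_def by auto
  then show "p * s * v + q * s * u = u * v" using eq by (simp add: field_simps)
qed

lemma cauchy_schwarz_sqrt_diff:
  fixes a c A C :: real
  assumes "a\<^sup>2 \<le> A\<^sup>2" "c\<^sup>2 \<le> C\<^sup>2" "0 \<le> A" "0 \<le> C"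
  shows "a * c + sqrt (A\<^sup>2 - a\<^sup>2) * sqrt (C\<^sup>2 - c\<^sup>2) \<le> A * C"
proof -
  define x where "x = sqrt (A\<^sup>2 - a\<^sup>2)"
  define y where "y = sqrt (C\<^sup>2 - c\<^sup>2)"
  have "A\<^sup>2 = a\<^sup>2 + x\<^sup>2" "C\<^sup>2 = c\<^sup>2 + y\<^sup>2" using assms unfolding x_def y_def by simp_all
  then have "(A * C)\<^sup>2 - (a * c + x * y)\<^sup>2 = (a * y - x * c)\<^sup>2"
    unfolding power_mult_distrib by (simp add: power2_eq_square algebra_simps)
  then have "(a * c + x * y)\<^sup>2 \<le> (A * C)\<^sup>2" by (metis diff_ge_0_iff_ge zero_le_power2)
  then have "a * c + x * y \<le> A * C" using power2_le_imp_le assms by (metis mult_nonneg_nonneg)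
  then show ?thesis unfolding x_def y_def .
qed

lemma cauchy_schwarz_sqrt_diff_strict:
  fixes a c :: real
  assumes "a\<^sup>2 \<le> 1" "c\<^sup>2 \<le> 1" "a \<noteq> c"
  shows "a * c + sqrt (1 - a\<^sup>2) * sqrt (1 - c\<^sup>2) < 1"
proof -
  define x where "x = sqrt (1 - a\<^sup>2)"
  define y where "y = sqrt (1 - c\<^sup>2)"
  have "x\<^sup>2 = 1 - a\<^sup>2" "y\<^sup>2 = 1 - c\<^sup>2" using assms unfolding x_def y_def by simp_all
  then have "2 * (1 - (a * c + x * y)) = (a - c)\<^sup>2 + (x - y)\<^sup>2" by (simp add: power2_diff)
  moreover have "(a - c)\<^sup>2 > 0" using assms by simp
  ultimately show ?thesis unfolding x_def y_def by (smt (verit) zero_le_power2)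
qed

lemma opt_value_eq:
  assumes "1 \<le> p" "0 \<le> q" "1 \<le> b"
  defines "s \<equiv> crit_point p q b"
  shows "opt_value p q b = p / sqrt (1 - s\<^sup>2) + b\<^sup>2 * q / sqrt (b\<^sup>2 - s\<^sup>2)"
proof -
  define u where "u = sqrt (1 - s\<^sup>2)"
  define v where "v = sqrt (b\<^sup>2 - s\<^sup>2)"
  note F = crit_point_facts[OF assms(1-3), folded s_def, folded u_def v_def]
  have "u * v * (s + p * u + q * v) = s * (p * s * v + q * s * u) + p * u\<^sup>2 * v + q * u * v\<^sup>2"
    using F(10) by (simp add: power2_eq_square algebra_simps)
  also have "\<dots> = p * v + b\<^sup>2 * q * u"
    unfolding F(7,8) by (simp add: power2_eq_square algebra_simps)
  finally have "s + p * u + q * v = p / u + b\<^sup>2 * q / v" using F(5,6) by (simp add: field_simps)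
  then show ?thesis unfolding opt_value_def objective_def s_def[symmetric] u_def v_def .
qed

text \<open>With \<open>s\<close> the critical point, the Cauchy--Schwarz estimates
  \<open>\<sigma> s + sqrt(1 - \<sigma>\<^sup>2) sqrt(1 - s\<^sup>2) \<le> 1\<close> and \<open>\<sigma> s + sqrt(b'\<^sup>2 - \<sigma>\<^sup>2) sqrt(b\<^sup>2 - s\<^sup>2) \<le> b' b\<close>
  bound \<open>G\<close> by an affine function of \<open>\<sigma>\<close> whose \<open>\<sigma>\<close>-coefficient vanishes by the critical point
  equation; this identity computes it.\<close>

lemma tangent_identity:
  fixes p q b b' s u v \<sigma> :: real
  assumes "0 < u" "0 < v" "p * s * v + q * s * u = u * v"
  shows "\<sigma> + p * ((1 - \<sigma> * s) / u) + q * ((b' * b - \<sigma> * s) / v)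
      = p / u + b\<^sup>2 * q / v + (b' - b) * (q * b / v)"
proof -
  have "(\<sigma> + p * ((1 - \<sigma> * s) / u) + q * ((b' * b - \<sigma> * s) / v)) * (u * v)
      = \<sigma> * (u * v) - \<sigma> * (p * s * v + q * s * u) + p * v + q * b' * b * u"
    using assms(1,2) by (simp add: field_simps)
  also have "\<dots> = p * v + q * b' * b * u" unfolding assms(3) by simp
  also have "\<dots> = (p / u + b\<^sup>2 * q / v + (b' - b) * (q * b / v)) * (u * v)"
    using assms by (simp add: field_simps power2_eq_square)
  finally show ?thesis using assms by simp
qed

lemma objective_le_tangent:
  assumes "1 \<le> p" "0 \<le> q" "1 \<le> b" "1 \<le> b'" "\<sigma>\<^sup>2 \<le> 1"
  shows "objective p q b' \<sigma> \<le> opt_value p q b + (b' - b) * opt_value_slope p q b"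
proof -
  define s where "s = crit_point p q b"
  define u where "u = sqrt (1 - s\<^sup>2)"
  define v where "v = sqrt (b\<^sup>2 - s\<^sup>2)"
  note F = crit_point_facts[OF assms(1-3), folded s_def, folded u_def v_def]
  have "1 \<le> b'\<^sup>2" using assms by (simp add: one_le_power)
  then have "\<sigma>\<^sup>2 \<le> b'\<^sup>2" using assms by linarith
  then have "\<sigma> * s + sqrt (1 - \<sigma>\<^sup>2) * u \<le> 1" "\<sigma> * s + sqrt (b'\<^sup>2 - \<sigma>\<^sup>2) * v \<le> b' * b"
    using cauchy_schwarz_sqrt_diff[of \<sigma> 1 s 1] cauchy_schwarz_sqrt_diff[of \<sigma> b' s b] assms F
    unfolding u_def v_def by simp_all
  then have "sqrt (1 - \<sigma>\<^sup>2) \<le> (1 - \<sigma> * s) / u" "sqrt (b'\<^sup>2 - \<sigma>\<^sup>2) \<le> (b' * b - \<sigma> * s) / v"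
    using F(5,6) by (simp_all add: pos_le_divide_eq)
  then have "objective p q b' \<sigma> \<le> \<sigma> + p * ((1 - \<sigma> * s) / u) + q * ((b' * b - \<sigma> * s) / v)"
    unfolding objective_def using mult_left_mono[of _ _ p] mult_left_mono[of _ _ q] assms
    by (smt (verit))
  also have "\<dots> = p / u + b\<^sup>2 * q / v + (b' - b) * (q * b / v)"
    using tangent_identity F(5,6,10) .
  finally show ?thesis
    using opt_value_eq[OF assms(1-3)]
    unfolding opt_value_slope_def s_def[symmetric] u_def[symmetric] v_def[symmetric] by simp
qed

lemma objective_le_opt_value:
  assumes "1 \<le> p" "0 \<le> q" "1 \<le> b" "\<sigma>\<^sup>2 \<le> 1"
  shows "objective p q b \<sigma> \<le> opt_value p q b"
  using objective_le_tangent[of p q b b \<sigma>] assms by simp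

lemma objective_less_opt_value:
  assumes "1 \<le> p" "0 \<le> q" "1 \<le> b" "\<sigma>\<^sup>2 \<le> 1" "\<sigma> \<noteq> crit_point p q b"
  shows "objective p q b \<sigma> < opt_value p q b"
proof -
  define s where "s = crit_point p q b"
  define u where "u = sqrt (1 - s\<^sup>2)"
  define v where "v = sqrt (b\<^sup>2 - s\<^sup>2)"
  note F = crit_point_facts[OF assms(1-3), folded s_def, folded u_def v_def]
  have "1 \<le> b\<^sup>2" using assms by (simp add: one_le_power)
  then have "\<sigma>\<^sup>2 \<le> b\<^sup>2" using assms by linarith
  then have "\<sigma> * s + sqrt (1 - \<sigma>\<^sup>2) * u < 1" "\<sigma> * s + sqrt (b\<^sup>2 - \<sigma>\<^sup>2) * v \<le> b * b"
    using cauchy_schwarz_sqrt_diff_strict[of \<sigma> s] cauchy_schwarz_sqrt_diff[of \<sigma> b s b] assms F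
    unfolding u_def v_def s_def by simp_all
  then have "sqrt (1 - \<sigma>\<^sup>2) < (1 - \<sigma> * s) / u" "sqrt (b\<^sup>2 - \<sigma>\<^sup>2) \<le> (b * b - \<sigma> * s) / v"
    using F(5,6) by (simp_all add: pos_less_divide_eq pos_le_divide_eq)
  then have "objective p q b \<sigma> < \<sigma> + p * ((1 - \<sigma> * s) / u) + q * ((b * b - \<sigma> * s) / v)"
    unfolding objective_def using mult_strict_left_mono[of _ _ p] mult_left_mono[of _ _ q] assms
    by (smt (verit))
  also have "\<dots> = p / u + b\<^sup>2 * q / v + (b - b) * (q * b / v)"
    using tangent_identity F(5,6,10) .
  finally show ?thesis
    using opt_value_eq[OF assms(1-3)] unfolding s_def[symmetric] u_def[symmetric] v_def[symmetric]
    by simp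
qed

lemma opt_value_le_dual:
  assumes "1 \<le> p" "0 \<le> q" "1 \<le> b" "p * x + q * y = 1"
  shows "opt_value p q b \<le> p * sqrt (1 + x\<^sup>2) + q * b * sqrt (1 + y\<^sup>2)"
proof -
  define s where "s = crit_point p q b"
  note F = crit_point_facts[OF assms(1-3), folded s_def]
  have cs: "s * x + sqrt (1 - s\<^sup>2) \<le> sqrt (1 + x\<^sup>2)" "s * y + sqrt (b\<^sup>2 - s\<^sup>2) \<le> b * sqrt (1 + y\<^sup>2)"
    using cauchy_schwarz_sqrt_diff[of s 1 x "sqrt (1 + x\<^sup>2)"]
      cauchy_schwarz_sqrt_diff[of s b y "sqrt (1 + y\<^sup>2)"] F assms by simp_all
  moreover have "opt_value p q b = p * (s * x + sqrt (1 - s\<^sup>2)) + q * (s * y + sqrt (b\<^sup>2 - s\<^sup>2))"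
  proof -
    have "s = s * (p * x + q * y)" using assms by simp
    then show ?thesis unfolding opt_value_def objective_def s_def[symmetric] by (simp add: algebra_simps)
  qed
  moreover have "p * (s * x + sqrt (1 - s\<^sup>2)) \<le> p * sqrt (1 + x\<^sup>2)"
    using cs(1) assms by (intro mult_left_mono) auto
  moreover have "q * (s * y + sqrt (b\<^sup>2 - s\<^sup>2)) \<le> q * b * sqrt (1 + y\<^sup>2)"
    using mult_left_mono[OF cs(2), of q] assms by (simp add: mult.assoc)
  ultimately show ?thesis by linarith
qed

lemma opt_value_slope_bounds:
  assumes "1 \<le> p" "0 \<le> q" "1 \<le> b"
  shows "q \<le> opt_value_slope p q b" "opt_value_slope p q b < q + 1"
proof -
  define s where "s = crit_point p q b"
  define u where "u = sqrt (1 - s\<^sup>2)"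
  define v where "v = sqrt (b\<^sup>2 - s\<^sup>2)"
  note F = crit_point_facts[OF assms(1-3), folded s_def, folded u_def v_def]
  have w: "opt_value_slope p q b = q * b / v"
    unfolding opt_value_slope_def s_def[symmetric] v_def ..
  have "v \<le> b" unfolding v_def using assms by (simp add: real_le_lsqrt)
  then have "q * 1 \<le> q * (b / v)" using assms F(6) by (intro mult_left_mono) auto
  then show "q \<le> opt_value_slope p q b" unfolding w by simp
  define Y where "Y = q * s / v"
  have "0 < p * s / u" using assms F by simp
  then have "Y < 1" using F(9) unfolding Y_def by linarith
  moreover have "0 \<le> Y" unfolding Y_def using assms F by simp
  ultimately have "Y\<^sup>2 < 1" by (simp add: power_less_one_iff)
  moreover have "(q * b / v)\<^sup>2 = q\<^sup>2 + Y\<^sup>2"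
  proof -
    have "(q * b / v)\<^sup>2 = q\<^sup>2 * (v\<^sup>2 + s\<^sup>2) / v\<^sup>2"
      using F(8) by (simp add: power_divide power_mult_distrib)
    also have "\<dots> = q\<^sup>2 + Y\<^sup>2"
      unfolding Y_def using F(6) by (simp add: field_simps power_divide power_mult_distrib)
    finally show ?thesis .
  qed
  ultimately have "(q * b / v)\<^sup>2 < (q + 1)\<^sup>2"
    using assms by (simp add: power2_eq_square algebra_simps)
  from power2_less_imp_less[OF this] show "opt_value_slope p q b < q + 1" unfolding w using assms by simp
qed

lemma opt_value_increment_bounds:
  assumes "1 \<le> p" "0 \<le> q" "1 \<le> b" "b < b'"
  shows "q * (b' - b) \<le> opt_value p q b' - opt_value p q b"
    "opt_value p q b' - opt_value p q b < (q + 1) * (b' - b)"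
proof -
  have b': "1 \<le> b'" using assms by simp
  have "(crit_point p q b')\<^sup>2 \<le> 1" "(crit_point p q b)\<^sup>2 \<le> 1"
    using crit_point_facts(3)[OF assms(1,2) b'] crit_point_facts(3)[OF assms(1-3)] by simp_all
  then have "opt_value p q b' \<le> opt_value p q b + (b' - b) * opt_value_slope p q b"
    "opt_value p q b \<le> opt_value p q b' + (b - b') * opt_value_slope p q b'"
    using objective_le_tangent[OF assms(1-3) b'] objective_le_tangent[OF assms(1,2) b' assms(3)]
    unfolding opt_value_def by simp_all
  moreover have "(b' - b) * opt_value_slope p q b < (b' - b) * (q + 1)"
    "(b' - b) * q \<le> (b' - b) * opt_value_slope p q b'"
    using opt_value_slope_bounds[OF assms(1-3)] opt_value_slope_bounds[OF assms(1,2) b'] assms(4)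
    by simp_all
  ultimately show "q * (b' - b) \<le> opt_value p q b' - opt_value p q b"
    "opt_value p q b' - opt_value p q b < (q + 1) * (b' - b)"
    by (simp_all add: algebra_simps)
qed

lemma opt_value_lipschitz:
  assumes "1 \<le> p" "0 \<le> q"
  shows "(q + 1)-lipschitz_on {1..} (opt_value p q)"
proof (rule lipschitz_onI)
  have ordered: "\<bar>opt_value p q b' - opt_value p q b\<bar> \<le> (q + 1) * (b' - b)"
    if "1 \<le> b" "b < b'" for b b'
  proof -
    have "0 \<le> q * (b' - b)" using assms that by simp
    then show ?thesis using opt_value_increment_bounds[OF assms that] by (simp add: abs_le_iff)
  qed
  fix b b' :: real assume "b \<in> {1..}" "b' \<in> {1..}"
  then show "dist (opt_value p q b) (opt_value p q b') \<le> (q + 1) * dist b b'"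
    using ordered[of b b'] ordered[of b' b]
    by (cases b b' rule: linorder_cases) (auto simp: dist_real_def abs_minus_commute)
qed (use assms in simp)

text \<open>\<open>G\<close> is affine in \<open>(p, q)\<close>, so evaluating at the middle critical point gives the convexity;
  strictness holds because moving \<open>(p, q)\<close> diagonally moves the critical point.\<close>

lemma opt_value_strict_midpoint_convex:
  assumes "0 < d" "1 \<le> p - d" "d \<le> q" "1 \<le> b"
  shows "2 * opt_value p q b < opt_value (p + d) (q + d) b + opt_value (p - d) (q - d) b"
proof -
  have pq: "1 \<le> p" "0 \<le> q" "1 \<le> p + d" "0 \<le> q + d" "1 \<le> p - d" "0 \<le> q - d"
    using assms by linarith+
  define s where "s = crit_point p q b"
  note F = crit_point_facts[OF pq(1,2) assms(4), folded s_def]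
  have s1: "s\<^sup>2 \<le> 1" using F by simp
  have "s \<noteq> crit_point (p - d) (q - d) b"
  proof
    assume "s = crit_point (p - d) (q - d) b"
    note G = crit_point_facts(9)[OF pq(5,6) assms(4), folded this]
    have "0 < s / sqrt (1 - s\<^sup>2)" "0 < s / sqrt (b\<^sup>2 - s\<^sup>2)" using F by simp_all
    then have "0 < d * (s / sqrt (1 - s\<^sup>2) + s / sqrt (b\<^sup>2 - s\<^sup>2))" using assms by simp
    moreover have "p * s / sqrt (1 - s\<^sup>2) + q * s / sqrt (b\<^sup>2 - s\<^sup>2)
       = (p - d) * s / sqrt (1 - s\<^sup>2) + (q - d) * s / sqrt (b\<^sup>2 - s\<^sup>2)
         + d * (s / sqrt (1 - s\<^sup>2) + s / sqrt (b\<^sup>2 - s\<^sup>2))"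
      by (simp add: algebra_simps add_divide_distrib diff_divide_distrib)
    ultimately show False using F(9) G by linarith
  qed
  then have "objective (p - d) (q - d) b s < opt_value (p - d) (q - d) b"
    using objective_less_opt_value[OF pq(5,6) assms(4) s1] by simp
  moreover have "objective (p + d) (q + d) b s \<le> opt_value (p + d) (q + d) b"
    using objective_le_opt_value[OF pq(3,4) assms(4) s1] .
  moreover have "objective (p + d) (q + d) b s + objective (p - d) (q - d) b s = 2 * opt_value p q b"
    unfolding opt_value_def objective_def s_def[symmetric] by (simp add: algebra_simps)
  ultimately show ?thesis by linarith
qed

lemma linear_le_opt_value:
  assumes "1 \<le> p" "0 \<le> q" "1 \<le> b"
  shows "p + q * b \<le> opt_value p q b"
  using objective_le_opt_value[OF assms, of 0] assms by (simp add: objective_def)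

lemma opt_value_le_linear:
  assumes "1 \<le> p" "0 \<le> q" "1 \<le> b"
  shows "opt_value p q b \<le> (p + q * b) * (1 + 1 / (2 * (p + q)\<^sup>2))"
proof -
  define n where "n = p + q"
  have n0: "0 < n" unfolding n_def using assms by simp
  have sqrt_le: "sqrt (1 + (1 / n)\<^sup>2) \<le> 1 + 1 / (2 * n\<^sup>2)"
  proof (rule real_le_lsqrt)
    have "(1 + 1 / (2 * n\<^sup>2))\<^sup>2 = 1 + (1 / n)\<^sup>2 + (1 / (2 * n\<^sup>2))\<^sup>2"
      using n0 by (simp add: power2_eq_square field_simps)
    then show "1 + (1 / n)\<^sup>2 \<le> (1 + 1 / (2 * n\<^sup>2))\<^sup>2" by simp
  qed (simp add: add_nonneg_nonneg)
  have "p * (1 / n) + q * (1 / n) = 1"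
    using n0 unfolding n_def by (simp add: add_divide_distrib[symmetric])
  then have "opt_value p q b \<le> (p + q * b) * sqrt (1 + (1 / n)\<^sup>2)"
    using opt_value_le_dual[OF assms, of "1 / n" "1 / n"] by (simp add: algebra_simps)
  also have "\<dots> \<le> (p + q * b) * (1 + 1 / (2 * n\<^sup>2))"
    using sqrt_le assms by (intro mult_left_mono) auto
  finally show ?thesis unfolding n_def .
qed

lemma opt_value_at_one:
  assumes "1 \<le> p" "0 \<le> q"
  shows "opt_value p q 1 = sqrt (1 + (p + q)\<^sup>2)"
proof (rule antisym)
  define n where "n = p + q"
  define r where "r = sqrt (1 + n\<^sup>2)"
  have n0: "0 < n" unfolding n_def using assms by simp
  have r0: "0 < r" and r2: "r\<^sup>2 = 1 + n\<^sup>2" unfolding r_def by (simp_all add: add_pos_nonneg)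
  have "n * sqrt (1 + (1 / n)\<^sup>2) = sqrt (n\<^sup>2 * (1 + (1 / n)\<^sup>2))"
    using n0 by (simp add: real_sqrt_mult)
  also have "n\<^sup>2 * (1 + (1 / n)\<^sup>2) = 1 + n\<^sup>2" using n0 by (simp add: field_simps power2_eq_square)
  finally have "n * sqrt (1 + (1 / n)\<^sup>2) = r" unfolding r_def .
  moreover have "p * (1 / n) + q * (1 / n) = 1"
    using n0 unfolding n_def by (simp add: add_divide_distrib[symmetric])
  ultimately show "opt_value p q 1 \<le> sqrt (1 + (p + q)\<^sup>2)"
    using opt_value_le_dual[OF assms, of 1 "1 / n" "1 / n"]
    unfolding r_def n_def by (simp add: algebra_simps)
  have "1 \<le> r\<^sup>2" using r2 by simp
  then have "(1 / r)\<^sup>2 \<le> 1" by (simp add: power_divide divide_le_eq)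
  moreover have "objective p q 1 (1 / r) = r"
  proof -
    have "0 < 1 + n\<^sup>2" by (simp add: add_pos_nonneg)
    then have "1 - (1 / r)\<^sup>2 = (n / r)\<^sup>2" using r2 by (simp add: field_simps power_divide)
    then have "sqrt (1 - (1 / r)\<^sup>2) = n / r" using n0 r0 by simp
    then have "objective p q 1 (1 / r) = 1 / r + (p + q) * (n / r)"
      unfolding objective_def by (simp add: distrib_right add_divide_distrib)
    also have "\<dots> = 1 / r + n * (n / r)" unfolding n_def ..
    also have "\<dots> = r" using r0 r2 by (simp add: field_simps power2_eq_square)
    finally show ?thesis .
  qed
  ultimately show "sqrt (1 + (p + q)\<^sup>2) \<le> opt_value p q 1"
    using objective_le_opt_value[OF assms, of 1 "1 / r"] unfolding r_def n_def by simp
qed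

text \<open>At \<open>t = 2k\<close> we have \<open>p(t) = k + 1\<close> and \<open>q(t) = k\<close>.\<close>

definition opt_value_even :: "nat \<Rightarrow> real \<Rightarrow> real" where
  "opt_value_even k = opt_value (real k + 1) (real k)"

lemma l_fun_even:
  assumes "1 \<le> b"
  shows "l_fun (2 * real k) b = opt_value_even k b - 2 * real k - sqrt 2"
proof -
  have "\<lfloor>2 * real k\<rfloor> = 2 * int k" by (metis floor_of_nat of_nat_mult of_nat_numeral)
  then have "q_fun (2 * real k) = real k" "p_fun (2 * real k) = real k + 1"
    unfolding p_fun_def q_fun_def by simp_all
  then show ?thesis
    using opt_value_eq[of "real k + 1" "real k" b] assms
    unfolding l_fun_def sigma_hat_def opt_value_even_def crit_point_def crit_lhs_def by simp
qed

lemma delta_eq: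
  assumes "1 \<le> b"
  shows "delta k b = opt_value_even (Suc k) b - opt_value_even k b - 2"
  using l_fun_even[OF assms, of k] l_fun_even[OF assms, of "Suc k"]
  unfolding delta_def by (simp add: algebra_simps)

lemma delta_strict_mono:
  assumes "1 \<le> b" "b < b'"
  shows "delta k b < delta k b'"
proof -
  have "1 \<le> b'" using assms by simp
  then show ?thesis
    using opt_value_increment_bounds(1)[of "real (Suc k) + 1" "real (Suc k)" b b']
      opt_value_increment_bounds(2)[of "real k + 1" "real k" b b'] assms
    unfolding delta_eq[OF assms(1)] delta_eq[OF \<open>1 \<le> b'\<close>] opt_value_even_def
    by (simp add: algebra_simps)
qed

lemma delta_continuous: "continuous_on {1..} (delta k)"
proof -
  have "continuous_on {1..} (opt_value_even j)" for j
    unfolding opt_value_even_def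
    by (rule lipschitz_on_continuous_on[OF opt_value_lipschitz]) simp_all
  then have "continuous_on {1..} (\<lambda>b. opt_value_even (Suc k) b - opt_value_even k b - 2)"
    by (intro continuous_intros)
  then show ?thesis by (rule continuous_on_cong[THEN iffD1, rotated 2]) (simp_all add: delta_eq)
qed

lemma delta_less_delta_Suc:
  assumes "1 \<le> b"
  shows "delta k b < delta (Suc k) b"
  using opt_value_strict_midpoint_convex[of 1 "real k + 2" "real k + 1" b] assms
  unfolding delta_eq[OF assms] opt_value_even_def by (simp add: algebra_simps)

lemma delta_at_one_neg: "delta k 1 < 0"
proof -
  define n :: real where "n = 2 * real k + 1"
  have "n < sqrt (1 + n\<^sup>2)" by (rule real_less_rsqrt) simp
  then have "sqrt (1 + (n + 2)\<^sup>2) < sqrt (1 + n\<^sup>2) + 2"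
    by (intro real_less_lsqrt) (simp_all add: power2_eq_square algebra_simps)
  then show ?thesis
    unfolding delta_eq[OF order.refl] opt_value_even_def
    using opt_value_at_one[of "real k + 1" "real k"] opt_value_at_one[of "real (Suc k) + 1" "real (Suc k)"]
    unfolding n_def by (simp add: algebra_simps)
qed

lemma delta_sqrt2_pos: "0 < delta k (sqrt 2)"
proof (induction k)
  case 0
  have "sqrt (1 - (3/5::real)\<^sup>2) = sqrt ((4/5)\<^sup>2)" by (simp add: power2_eq_square)
  then have s: "sqrt (1 - (3/5::real)\<^sup>2) = 4/5" by simp
  have "1.28 < sqrt ((sqrt 2)\<^sup>2 - (3/5::real)\<^sup>2)"
    by (rule real_less_rsqrt) (simp add: power2_eq_square)
  then have "3.48 \<le> opt_value_even 1 (sqrt 2)"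
    using objective_le_opt_value[of 2 1 "sqrt 2" "3/5"]
    unfolding opt_value_even_def objective_def s by (simp add: power2_eq_square)
  moreover have "opt_value_even 0 (sqrt 2) \<le> sqrt 2"
    using opt_value_le_dual[of 1 0 "sqrt 2" 1 0] unfolding opt_value_even_def by simp
  moreover have "sqrt 2 < (1.42::real)" by (rule real_less_lsqrt) (simp_all add: power2_eq_square)
  moreover have "1 \<le> sqrt (2::real)" by simp
  ultimately show ?case using delta_eq[of "sqrt 2" 0] by simp
next
  case (Suc k)
  then show ?case using delta_less_delta_Suc[of "sqrt 2" k] by simp
qed

lemma delta_lower_bound:
  assumes "1 \<le> b"
  shows "b - 1 - (real k + 1 + real k * b) / (2 * (2 * real k + 1)\<^sup>2) \<le> delta k b"
  using linear_le_opt_value[of "real (Suc k) + 1" "real (Suc k)" b]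
    opt_value_le_linear[of "real k + 1" "real k" b] assms
  unfolding delta_eq[OF assms] opt_value_even_def by (simp add: algebra_simps add_divide_distrib)

lemma delta_pos_above: "0 < delta k (1 + 2 / (real k + 1))"
proof -
  define t where "t = real k"
  define b where "b = 1 + 2 / (t + 1)"
  have t0: "0 \<le> t" unfolding t_def by simp
  have "((t + 1) + t * b) * (t + 1) = 2 * t\<^sup>2 + 5 * t + 1"
    unfolding b_def using t0 by (simp add: field_simps power2_eq_square)
  also have "\<dots> < 2 * (2 * (2 * t + 1)\<^sup>2)"
  proof -
    have "(2 * t + 1)\<^sup>2 = 4 * t\<^sup>2 + 4 * t + 1" by (simp add: power2_eq_square algebra_simps)
    then show ?thesis using t0 zero_le_power2[of t] by linarith
  qed
  finally have "((t + 1) + t * b) / (2 * (2 * t + 1)\<^sup>2) < 2 / (t + 1)"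
    using t0 by (simp add: field_simps)
  then show ?thesis
    using delta_lower_bound[of b k] t0 unfolding b_def t_def by simp
qed

lemma delta_zero_ex1: "\<exists>!\<beta>. 1 < \<beta> \<and> \<beta> < sqrt 2 \<and> delta k \<beta> = 0"
proof -
  have "continuous_on {1..sqrt 2} (delta k)"
    using delta_continuous by (rule continuous_on_subset) auto
  then obtain x where x: "1 \<le> x" "x \<le> sqrt 2" "delta k x = 0"
    using IVT'[of "delta k" 1 0 "sqrt 2"] delta_at_one_neg[of k] delta_sqrt2_pos[of k] by auto
  then have "1 < x \<and> x < sqrt 2 \<and> delta k x = 0"
    using delta_at_one_neg[of k] delta_sqrt2_pos[of k] by (auto simp: order.order_iff_strict)
  moreover have "y = x" if "1 < y \<and> y < sqrt 2 \<and> delta k y = 0" for y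
    using delta_strict_mono[of y x k] delta_strict_mono[of x y k] calculation that
    by (cases y x rule: linorder_cases) auto
  ultimately show ?thesis by blast
qed

lemma beta_c: "1 < beta_c k" "beta_c k < sqrt 2" "delta k (beta_c k) = 0"
  using theI'[OF delta_zero_ex1[of k]] unfolding beta_c_def by auto

lemma beta_c_less_iff_delta_pos:
  assumes "1 \<le> b"
  shows "beta_c k < b \<longleftrightarrow> 0 < delta k b"
  using delta_strict_mono[of b "beta_c k" k] delta_strict_mono[of "beta_c k" b k] beta_c[of k] assms
  by (cases b "beta_c k" rule: linorder_cases) auto

theorem lemma3p13:
  shows "(\<forall>k. beta_c (Suc k) < beta_c k) \<and> beta_c \<longlonglongrightarrow> 1"
proof
  show "\<forall>k. beta_c (Suc k) < beta_c k"
  proof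
    fix k
    have "1 \<le> beta_c k" using beta_c(1) by (rule less_imp_le)
    then show "beta_c (Suc k) < beta_c k"
      using beta_c_less_iff_delta_pos[of "beta_c k" "Suc k"] delta_less_delta_Suc[of "beta_c k" k]
        beta_c(3)[of k] by simp
  qed
  have "(\<lambda>k. 2 / (real k + 1)) \<longlonglongrightarrow> 0"
    using tendsto_mult_right_zero[OF LIMSEQ_inverse_real_of_nat, of 2]
    by (simp add: inverse_eq_divide add.commute)
  then have upper_lim: "(\<lambda>k. 1 + 2 / (real k + 1)) \<longlonglongrightarrow> 1"
    using tendsto_add[OF tendsto_const, of _ 0 sequentially 1] by simp
  have upper: "beta_c k \<le> 1 + 2 / (real k + 1)" for k
    using beta_c_less_iff_delta_pos[of "1 + 2 / (real k + 1)" k] delta_pos_above by simp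
  have lower: "1 \<le> beta_c k" for k using beta_c(1)[of k] by simp
  show "beta_c \<longlonglongrightarrow> 1"
    by (rule tendsto_sandwich[OF _ _ tendsto_const upper_lim]) (intro always_eventually allI lower upper)+
qed

end
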